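(* Let $\Gamma$ be a nonempty set and $\mathcal{S}$ a pointwise closed family of subsets of $\Gamma$ containing all singletons. Let $(x_n)_{n\in\mathbb{N}}$ be a bounded sequence in $J\mathcal{S}$. If for every $s\in\mathcal{S}$ the sequence $(s^*(x_n))_{n\in\mathbb{N}}$ is Cauchy, then $(x_n)$ is weakly Cauchy.
   Context: Pointwise closed means $\{\chi_s:s\in\mathcal{S}\}$ is closed in $\{0,1\}^\Gamma$. For a finitely supported $\phi:\Gamma\to\mathbb{R}$, the James-$\mathcal{S}$ norm is $\|\phi\|=\sup\big(\sum_{i=1}^n(\sum_{a\in s_i}\phi(a))^2\big)^{1/2}$ over all finite families of pairwise disjoint $s_1,\dots,s_n\in\mathcal{S}$; $J\mathcal{S}$ is the completion of the finitely supported functions in this norm. For $s\in\mathcal{S}$, $s^*$ is the bounded functional on $J\mathcal{S}$ extending $\phi\mapsto\sum_{a\in s}\phi(a)$. *)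

theory Defs
  imports "HOL-Analysis.Analysis"
begin

text \<open>The ground set Gamma is the universe of a type 'g (nonempty automatically).
  Characteristic functions of subsets of Gamma are the predicates 'g => bool,
  and {0,1}^Gamma carries the product topology (bool has the discrete topology).\<close>

definition pointwise_closed :: "'g set set \<Rightarrow> bool" where
  "pointwise_closed S \<longleftrightarrow> closed {(\<lambda>a. a \<in> s) | s. s \<in> S}"

definition fin_supp :: "('g \<Rightarrow> real) \<Rightarrow> bool" where
  "fin_supp \<phi> \<longleftrightarrow> finite {a. \<phi> a \<noteq> 0}"

definition ssum :: "('g \<Rightarrow> real) \<Rightarrow> 'g set \<Rightarrow> real" where
  "ssum \<phi> s = sum \<phi> (s \<inter> {a. \<phi> a \<noteq> 0})"

definition jnorm :: "'g set set \<Rightarrow> ('g \<Rightarrow> real) \<Rightarrow> real" where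
  "jnorm S \<phi> = (SUP F \<in> {F. finite F \<and> F \<subseteq> S \<and> disjoint F}.
                    sqrt (\<Sum>s\<in>F. (ssum \<phi> s)\<^sup>2))"

text \<open>A completion of the finitely supported functions in the James-S norm:
  a Banach space X together with a linear isometric map E from the finitely supported
  functions into X with dense range.  (The completion is unique up to isometric isomorphism.)\<close>
definition is_JS_completion ::
  "'g set set \<Rightarrow> (('g \<Rightarrow> real) \<Rightarrow> 'x::banach) \<Rightarrow> bool" where
  "is_JS_completion S E \<longleftrightarrow>
     (\<forall>\<phi> \<psi>. fin_supp \<phi> \<longrightarrow> fin_supp \<psi> \<longrightarrow> E (\<lambda>a. \<phi> a + \<psi> a) = E \<phi> + E \<psi>) \<and>
     (\<forall>\<phi> c. fin_supp \<phi> \<longrightarrow> E (\<lambda>a. c * \<phi> a) = c *\<^sub>R E \<phi>) \<and>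
     (\<forall>\<phi>. fin_supp \<phi> \<longrightarrow> norm (E \<phi>) = jnorm S \<phi>) \<and>
     closure (E ` {\<phi>. fin_supp \<phi>}) = UNIV"

definition is_s_star ::
  "'g set set \<Rightarrow> (('g \<Rightarrow> real) \<Rightarrow> 'x::banach) \<Rightarrow> 'g set \<Rightarrow> ('x \<Rightarrow> real) \<Rightarrow> bool" where
  "is_s_star S E s f \<longleftrightarrow> bounded_linear f \<and> (\<forall>\<phi>. fin_supp \<phi> \<longrightarrow> f (E \<phi>) = ssum \<phi> s)"

definition weakly_Cauchy :: "(nat \<Rightarrow> 'x::real_normed_vector) \<Rightarrow> bool" where
  "weakly_Cauchy x \<longleftrightarrow> (\<forall>f::'x \<Rightarrow> real. bounded_linear f \<longrightarrow> Cauchy (\<lambda>n. f (x n)))"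

end

theory Submission
  imports Defs
begin

text \<open>
  Write \<open>s\<^sup>*\<close> also for \<open>s = {}\<close>, where it is \<open>0\<close>.  Every \<open>x\<close> is normed by a functional
  \<open>k = \<Sum>i. a\<^sub>i P\<^sub>i\<^sup>*\<close> with pairwise disjoint \<open>P\<^sub>i \<in> S \<union> {{}}\<close> and \<open>\<Sum>i. a\<^sub>i\<^sup>2 = 1\<close>, because
  the supremum defining \<open>\<parallel>x\<parallel>\<^sup>2\<close> is attained by a disjoint sequence: list families that
  nearly attain it by the first points they meet in a countable enumeration of the supports
  of approximants of \<open>x\<close>; as sequences of indicator functions in the compact space
  \<open>nat \<Rightarrow> 'g \<Rightarrow> bool\<close> they accumulate, and pointwise closedness of \<open>S\<close> makes the limit
  again a disjoint sequence of members of \<open>S \<union> {{}}\<close>.  Since \<open>(P\<^sub>i\<^sup>* v)\<^sub>i\<close> has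
  \<open>\<ell>\<^sup>2\<close>-norm at most \<open>\<parallel>v\<parallel>\<close>, such a \<open>k\<close> tends to \<open>0\<close> along every bounded sequence
  along which all \<open>s\<^sup>*\<close> tend to \<open>0\<close>.

  If \<open>f (x n)\<close> were not Cauchy, differences \<open>y j\<close> of far-apart terms would form such a
  sequence with \<open>f \<ge> \<epsilon>\<close> on its convex hull.  Simons' argument rules this out: choose
  \<open>u K\<close> greedily in the convex hulls \<open>C K\<close> of the tails of \<open>y\<close>, so that the norming
  functional \<open>k\<close> of \<open>z = \<Sum>K. 2\<^sup>-\<^sup>K\<^sup>-\<^sup>1 u K\<close> drops by at most \<open>\<epsilon>\<^sub>K\<close> from \<open>T K\<close> to
  \<open>T (K + 1)\<close>, where \<open>T K = \<Sum>j. 2\<^sup>-\<^sup>j\<^sup>-\<^sup>1 u (j + K) \<in> closure (C K)\<close>.  Then \<open>k\<close> stays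
  large on every \<open>T K\<close>, although it tends to \<open>0\<close> along \<open>y\<close>.
\<close>

section \<open>Square-summable sequences\<close>

lemma abs_mult_le_half_sum_squares: "\<bar>a * b\<bar> \<le> (a\<^sup>2 + b\<^sup>2) / (2::real)"
proof -
  have "0 \<le> (\<bar>a\<bar> - \<bar>b\<bar>)\<^sup>2" by simp
  then show ?thesis by (simp add: power2_diff abs_mult)
qed

lemma summable_mult_of_summable_squares:
  fixes a b :: "nat \<Rightarrow> real"
  assumes "summable (\<lambda>i. (a i)\<^sup>2)" "summable (\<lambda>i. (b i)\<^sup>2)"
  shows "summable (\<lambda>i. a i * b i)"
proof (rule summable_rabs_cancel, rule summable_comparison_test)
  show "\<exists>N. \<forall>n\<ge>N. norm \<bar>a n * b n\<bar> \<le> ((a n)\<^sup>2 + (b n)\<^sup>2) / 2"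
    using abs_mult_le_half_sum_squares by auto
  show "summable (\<lambda>i. ((a i)\<^sup>2 + (b i)\<^sup>2) / 2)"
    using assms by (intro summable_divide summable_add)
qed

lemma abs_suminf_mult_le:
  fixes a b :: "nat \<Rightarrow> real"
  assumes a: "summable (\<lambda>i. (a i)\<^sup>2)" and b: "summable (\<lambda>i. (b i)\<^sup>2)"
  shows "\<bar>\<Sum>i. a i * b i\<bar> \<le> sqrt (\<Sum>i. (a i)\<^sup>2) * sqrt (\<Sum>i. (b i)\<^sup>2)"
proof (rule LIMSEQ_le_const2)
  show "(\<lambda>n. \<bar>\<Sum>i<n. a i * b i\<bar>) \<longlonglongrightarrow> \<bar>\<Sum>i. a i * b i\<bar>"
    by (intro tendsto_rabs summable_LIMSEQ summable_mult_of_summable_squares a b)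
  have "\<bar>\<Sum>i<n. a i * b i\<bar> \<le> sqrt (\<Sum>i. (a i)\<^sup>2) * sqrt (\<Sum>i. (b i)\<^sup>2)" for n
  proof -
    have "\<bar>\<Sum>i<n. a i * b i\<bar> = sqrt ((\<Sum>i<n. a i * b i)\<^sup>2)" by simp
    also have "\<dots> \<le> sqrt ((\<Sum>i<n. (a i)\<^sup>2) * (\<Sum>i<n. (b i)\<^sup>2))"
      by (rule real_sqrt_le_mono[OF Cauchy_Schwarz_ineq_sum])
    also have "\<dots> \<le> sqrt ((\<Sum>i. (a i)\<^sup>2) * (\<Sum>i. (b i)\<^sup>2))"
      by (intro real_sqrt_le_mono mult_mono sum_le_suminf a b sum_nonneg suminf_nonneg) auto
    finally show ?thesis by (simp add: real_sqrt_mult)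
  qed
  then show "\<exists>N. \<forall>n\<ge>N. \<bar>\<Sum>i<n. a i * b i\<bar> \<le> sqrt (\<Sum>i. (a i)\<^sup>2) * sqrt (\<Sum>i. (b i)\<^sup>2)"
    by blast
qed

lemma suminf_mult_tendsto_zero:
  fixes a :: "nat \<Rightarrow> real" and b :: "nat \<Rightarrow> nat \<Rightarrow> real"
  assumes a: "summable (\<lambda>i. (a i)\<^sup>2)"
    and b: "\<And>n. summable (\<lambda>i. (b n i)\<^sup>2)" and bC: "\<And>n. (\<Sum>i. (b n i)\<^sup>2) \<le> C"
    and lim: "\<And>i. (\<lambda>n. b n i) \<longlonglongrightarrow> 0"
  shows "(\<lambda>n. \<Sum>i. a i * b n i) \<longlonglongrightarrow> 0"
proof (rule LIMSEQ_I)
  fix e :: real assume e: "e > 0"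
  have "0 \<le> C" using order_trans[OF suminf_nonneg[OF b] bC] by simp
  define D where "D = sqrt C + 1"
  have D: "sqrt C < D" "0 < D"
    unfolding D_def using real_sqrt_ge_zero[OF \<open>0 \<le> C\<close>] by linarith+
  define r where "r = e / (2 * D)"
  have r: "r > 0" using e D by (simp add: r_def)
  have "r * D = e / 2" using D by (simp add: r_def)
  then have rC: "r * sqrt C < e / 2" using mult_strict_left_mono[OF D(1) r] by linarith
  obtain N where N: "norm (\<Sum>i. (a (i + N))\<^sup>2) < r\<^sup>2"
    using suminf_exist_split[OF _ a, of "r\<^sup>2"] r by auto
  have a': "summable (\<lambda>i. (a (i + N))\<^sup>2)"
    using a by (subst summable_iff_shift)
  have "(\<lambda>n. \<Sum>i<N. a i * b n i) \<longlonglongrightarrow> 0"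
    using lim by (auto intro!: tendsto_null_sum tendsto_mult_right_zero)
  then obtain M where M: "\<And>n. n \<ge> M \<Longrightarrow> \<bar>\<Sum>i<N. a i * b n i\<bar> < e / 2"
    using LIMSEQ_D[of _ 0 "e / 2"] e by fastforce
  show "\<exists>M. \<forall>n\<ge>M. norm ((\<Sum>i. a i * b n i) - 0) < e"
  proof (intro exI allI impI)
    fix n assume "M \<le> n"
    have b': "summable (\<lambda>i. (b n (i + N))\<^sup>2)"
      using b by (subst summable_iff_shift)
    have "(\<Sum>i. (b n (i + N))\<^sup>2) \<le> (\<Sum>i. (b n i)\<^sup>2)"
      using suminf_split_initial_segment[OF b, of n N] by (simp add: sum_nonneg)
    then have tail_b: "sqrt (\<Sum>i. (b n (i + N))\<^sup>2) \<le> sqrt C"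
      using bC[of n] by simp
    have tail_a: "sqrt (\<Sum>i. (a (i + N))\<^sup>2) \<le> r"
      using N r real_sqrt_less_mono[of _ "r\<^sup>2"] by (simp add: suminf_nonneg[OF a'] less_imp_le)
    have "\<bar>\<Sum>i. a (i + N) * b n (i + N)\<bar>
        \<le> sqrt (\<Sum>i. (a (i + N))\<^sup>2) * sqrt (\<Sum>i. (b n (i + N))\<^sup>2)"
      by (rule abs_suminf_mult_le[OF a' b'])
    also have "\<dots> \<le> r * sqrt C"
      using tail_a tail_b r by (intro mult_mono) (auto simp: suminf_nonneg[OF b'])
    finally have "\<bar>\<Sum>i. a (i + N) * b n (i + N)\<bar> \<le> r * sqrt C" .
    moreover have "(\<Sum>i. a i * b n i) = (\<Sum>i. a (i + N) * b n (i + N)) + (\<Sum>i<N. a i * b n i)"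
      by (rule suminf_split_initial_segment[OF summable_mult_of_summable_squares[OF a b]])
    ultimately show "norm ((\<Sum>i. a i * b n i) - 0) < e"
      using M[OF \<open>M \<le> n\<close>] rC by simp
  qed
qed

lemma suminf_mult_bessel_tendsto_zero:
  fixes f :: "nat \<Rightarrow> 'a::real_normed_vector \<Rightarrow> real"
  assumes a: "summable (\<lambda>i. (a i)\<^sup>2)"
    and bessel: "\<And>v n. (\<Sum>i<n. (f i v)\<^sup>2) \<le> (norm v)\<^sup>2"
    and y: "bounded (range y)" and lim: "\<And>i. (\<lambda>n. f i (y n)) \<longlonglongrightarrow> 0"
  shows "(\<lambda>n. \<Sum>i. a i * f i (y n)) \<longlonglongrightarrow> 0"
proof -
  obtain B where B: "\<And>n. norm (y n) \<le> B"
    using y by (auto simp: bounded_iff)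
  have summable: "summable (\<lambda>i. (f i (y n))\<^sup>2)" for n
    by (rule summableI_nonneg_bounded[OF _ bessel]) simp
  have "(\<Sum>i. (f i (y n))\<^sup>2) \<le> B\<^sup>2" for n
    using suminf_le_const[OF summable bessel] power_mono[OF B norm_ge_zero] by (rule order_trans)
  then show ?thesis
    by (rule suminf_mult_tendsto_zero[OF a summable _ lim])
qed

lemma bounded_linear_l2_combination:
  fixes f :: "nat \<Rightarrow> 'a::real_normed_vector \<Rightarrow> real"
  assumes lin: "\<And>i. linear (f i)"
    and bessel: "\<And>v n. (\<Sum>i<n. (f i v)\<^sup>2) \<le> (norm v)\<^sup>2"
    and a: "summable (\<lambda>i. (a i)\<^sup>2)" "(\<Sum>i. (a i)\<^sup>2) \<le> 1"
  shows "bounded_linear (\<lambda>v. \<Sum>i. a i * f i v)" and "\<bar>\<Sum>i. a i * f i v\<bar> \<le> norm v"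
proof -
  have fv: "summable (\<lambda>i. (f i v)\<^sup>2)" "(\<Sum>i. (f i v)\<^sup>2) \<le> (norm v)\<^sup>2" for v
    using summableI_nonneg_bounded[OF _ bessel] suminf_le_const[OF _ bessel] by auto
  have af: "summable (\<lambda>i. a i * f i v)" for v
    by (rule summable_mult_of_summable_squares[OF a(1) fv(1)])
  have bound: "\<bar>\<Sum>i. a i * f i v\<bar> \<le> norm v" for v
  proof -
    have "\<bar>\<Sum>i. a i * f i v\<bar> \<le> sqrt (\<Sum>i. (a i)\<^sup>2) * sqrt (\<Sum>i. (f i v)\<^sup>2)"
      by (rule abs_suminf_mult_le[OF a(1) fv(1)])
    also have "\<dots> \<le> 1 * norm v"
      using a(2) real_sqrt_le_mono[OF fv(2)[of v]]
      by (intro mult_mono) (auto simp: suminf_nonneg[OF fv(1)])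
    finally show ?thesis by simp
  qed
  then show "\<bar>\<Sum>i. a i * f i v\<bar> \<le> norm v" .
  show "bounded_linear (\<lambda>v. \<Sum>i. a i * f i v)"
  proof (rule bounded_linear_intro[of _ 1])
    show "(\<Sum>i. a i * f i (v + w)) = (\<Sum>i. a i * f i v) + (\<Sum>i. a i * f i w)" for v w
      using suminf_add[OF af af] by (simp add: linear_add[OF lin] distrib_left)
    show "(\<Sum>i. a i * f i (c *\<^sub>R v)) = c *\<^sub>R (\<Sum>i. a i * f i v)" for c v
      using suminf_mult[OF af, of c] by (simp add: linear_scale[OF lin] mult.left_commute)
    show "norm (\<Sum>i. a i * f i v) \<le> norm v * 1" for v
      using bound[of v] by simp
  qed
qed

lemma sums_if_partial_sums_approach:
  fixes f :: "nat \<Rightarrow> real"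
  assumes nonneg: "\<And>i. 0 \<le> f i" and le: "\<And>n. (\<Sum>i<n. f i) \<le> c"
    and approach: "\<And>e. e > 0 \<Longrightarrow> \<exists>n. c - e \<le> (\<Sum>i<n. f i)"
  shows "f sums c"
proof -
  have summable: "summable f"
    by (rule summableI_nonneg_bounded[OF nonneg le])
  have "suminf f = c"
  proof (rule antisym)
    show "suminf f \<le> c"
      by (rule suminf_le_const[OF summable le])
    show "c \<le> suminf f"
    proof (rule field_le_epsilon)
      fix e :: real assume "e > 0"
      then obtain n where "c - e \<le> (\<Sum>i<n. f i)"
        using approach by blast
      then show "c \<le> suminf f + e"
        using sum_le_suminf[OF summable, of "{..<n}"] nonneg by force
    qed
  qed
  then show ?thesis
    using summable_sums[OF summable] by simp
qed

section \<open>Simons' argument\<close>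

lemma summable_half_series:
  fixes w :: "nat \<Rightarrow> 'a::banach"
  assumes "\<And>j. norm (w j) \<le> B"
  shows "summable (\<lambda>j. (1/2::real) ^ Suc j *\<^sub>R w j)"
proof (rule summable_comparison_test)
  show "\<exists>N. \<forall>j\<ge>N. norm ((1/2::real) ^ Suc j *\<^sub>R w j) \<le> B * (1/2) ^ Suc j"
    using assms by (auto simp: mult.commute intro!: mult_left_mono)
  show "summable (\<lambda>j. B * (1/2::real) ^ Suc j)"
    by (intro summable_mult) (simp add: summable_geometric_iff)
qed

lemma half_series_in_closure:
  fixes w :: "nat \<Rightarrow> 'a::banach"
  assumes C: "convex C" and w: "\<And>j. w j \<in> C" and bounded: "\<And>j. norm (w j) \<le> B"
  shows "(\<Sum>j. (1/2::real) ^ Suc j *\<^sub>R w j) \<in> closure C"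
proof -
  define P where "P n = (\<Sum>j<n. (1/2::real) ^ Suc j *\<^sub>R w j)" for n
  text \<open>Each partial sum, completed by the remaining weight \<open>(1/2)\<^sup>n\<close> on a point
    of \<open>C\<close>, is a convex combination of points of \<open>C\<close>.\<close>
  have "P n + (1/2::real) ^ n *\<^sub>R v \<in> C" if "v \<in> C" for n v
    using that
  proof (induction n arbitrary: v)
    case (Suc n)
    have "(1/2::real) *\<^sub>R w n + (1/2::real) *\<^sub>R v \<in> C"
      by (rule convexD[OF C w Suc.prems]) auto
    from Suc.IH[OF this] show ?case
      by (simp add: P_def scaleR_add_right algebra_simps)
  qed (simp add: P_def)
  moreover have "(\<lambda>n. (1/2::real) ^ n *\<^sub>R w 0) \<longlonglongrightarrow> 0"
    using tendsto_scaleR[OF LIMSEQ_power_zero[of "1/2::real"] tendsto_const[of "w 0"]] by simp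
  then have "(\<lambda>n. P n + (1/2::real) ^ n *\<^sub>R w 0) \<longlonglongrightarrow> (\<Sum>j. (1/2::real) ^ Suc j *\<^sub>R w j) + 0"
    unfolding P_def by (intro tendsto_add summable_LIMSEQ summable_half_series[OF bounded])
  ultimately show ?thesis
    unfolding closure_sequential using w by (intro exI[of _ "\<lambda>n. P n + (1/2::real) ^ n *\<^sub>R w 0"]) auto
qed

lemma half_series_tail:
  fixes u :: "nat \<Rightarrow> 'a::banach"
  assumes bounded: "\<And>j. norm (u j) \<le> B"
  defines "T \<equiv> \<lambda>K. \<Sum>j. (1/2::real) ^ Suc j *\<^sub>R u (j + K)"
  shows "T K = (1/2::real) *\<^sub>R u K + (1/2::real) *\<^sub>R T (Suc K)"
    and "T 0 = (\<Sum>j<K. (1/2::real) ^ Suc j *\<^sub>R u j) + (1/2::real) ^ K *\<^sub>R T K"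
proof -
  have summable: "summable (\<lambda>j. (1/2::real) ^ Suc j *\<^sub>R u (j + K))" for K
    using summable_half_series[of "\<lambda>j. u (j + K)"] bounded by blast
  show step: "T K = (1/2::real) *\<^sub>R u K + (1/2::real) *\<^sub>R T (Suc K)" for K
    using suminf_split_head[OF summable[of K]] suminf_scaleR_right[OF summable[of "Suc K"], of "1/2"]
    by (simp add: T_def algebra_simps)
  show "T 0 = (\<Sum>j<K. (1/2::real) ^ Suc j *\<^sub>R u j) + (1/2::real) ^ K *\<^sub>R T K"
  proof (induction K)
    case (Suc K)
    then show ?case by (simp add: step[of K] algebra_simps)
  qed simp
qed

lemma exists_nearly_minimal_point:
  fixes g :: "'a::topological_space \<Rightarrow> real"
  assumes "A \<noteq> {}" "bdd_below (g ` A)" "continuous_on UNIV g" "e > 0"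
  shows "\<exists>u\<in>A. \<forall>v\<in>closure A. g u \<le> g v + e"
proof -
  obtain u where u: "u \<in> A" "g u < Inf (g ` A) + e"
    using cInf_less_iff[of "g ` A" "Inf (g ` A) + e"] assms by auto
  have "A \<subseteq> {v. g u - e \<le> g v}"
    using u(2) cInf_lower[OF _ assms(2)] by force
  moreover have "closed {v. g u - e \<le> g v}"
    by (rule closed_Collect_le) (use assms(3) in \<open>auto intro: continuous_on_const\<close>)
  ultimately have "closure A \<subseteq> {v. g u - e \<le> g v}"
    by (rule closure_minimal)
  then show ?thesis using u(1) by force
qed

lemma exists_greedy_half_series:
  fixes C :: "nat \<Rightarrow> 'a::real_normed_vector set" and e :: "nat \<Rightarrow> real"
  assumes C: "\<And>K. C K \<noteq> {}" and e: "\<And>K. e K > 0"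
  shows "\<exists>u. \<forall>K. u K \<in> C K \<and> (\<forall>v\<in>closure (C K).
            norm ((\<Sum>j<K. (1/2::real) ^ Suc j *\<^sub>R u j) + (1/2) ^ K *\<^sub>R u K)
              \<le> norm ((\<Sum>j<K. (1/2::real) ^ Suc j *\<^sub>R u j) + (1/2) ^ K *\<^sub>R v) + e K)"
proof -
  define good where "good K H u \<longleftrightarrow> u \<in> C K \<and>
      (\<forall>v\<in>closure (C K). norm (H + (1/2::real) ^ K *\<^sub>R u) \<le> norm (H + (1/2) ^ K *\<^sub>R v) + e K)"
    for K and H u :: 'a
  have good: "\<exists>u. good K H u" for K H
  proof -
    have "continuous_on UNIV (\<lambda>v. norm (H + (1/2::real) ^ K *\<^sub>R v))"
      by (intro continuous_intros)
    moreover have "bdd_below ((\<lambda>v. norm (H + (1/2::real) ^ K *\<^sub>R v)) ` C K)"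
      by (rule bdd_belowI[of _ 0]) auto
    ultimately show ?thesis
      using exists_nearly_minimal_point[OF C[of K]] e[of K] unfolding good_def by blast
  qed
  \<comment> \<open>The recursion runs on pairs \<open>(H K, u K)\<close> of a partial sum and the next point.\<close>
  have "\<exists>f. \<forall>K. ((K = 0 \<longrightarrow> fst (f K) = 0) \<and> good K (fst (f K)) (snd (f K))) \<and>
                fst (f (Suc K)) = fst (f K) + (1/2::real) ^ Suc K *\<^sub>R snd (f K)"
  proof (rule dependent_nat_choice)
    show "\<exists>x. (0 = 0 \<longrightarrow> fst x = 0) \<and> good 0 (fst x) (snd x)"
      using good[of 0 0] by auto
    show "\<exists>y. ((Suc K = 0 \<longrightarrow> fst y = 0) \<and> good (Suc K) (fst y) (snd y)) \<and>
              fst y = fst x + (1/2::real) ^ Suc K *\<^sub>R snd x" for x K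
      using good[of "Suc K" "fst x + (1/2::real) ^ Suc K *\<^sub>R snd x"] by auto
  qed
  then obtain f where f0: "fst (f 0) = 0" and good_f: "\<And>K. good K (fst (f K)) (snd (f K))"
    and f_Suc: "\<And>K. fst (f (Suc K)) = fst (f K) + (1/2::real) ^ Suc K *\<^sub>R snd (f K)"
    by blast
  have "fst (f K) = (\<Sum>j<K. (1/2::real) ^ Suc j *\<^sub>R snd (f j))" for K
    by (induction K) (simp_all add: f0 f_Suc)
  then show ?thesis
    using good_f unfolding good_def by (intro exI[of _ "snd \<circ> f"]) auto
qed

text \<open>The step of Simons' argument: if \<open>u\<close> nearly minimises \<open>\<parallel>H + r v\<parallel>\<close> against
  \<open>v = T\<close>, a norming functional of \<open>z = H + r T\<close> cannot drop much from \<open>T\<close> to \<open>T'\<close>.\<close>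
lemma norming_functional_step_le:
  fixes k :: "'a::real_normed_vector \<Rightarrow> real"
  assumes k: "linear k" "\<And>v. k v \<le> norm v" "k (H + r *\<^sub>R T) = norm (H + r *\<^sub>R T)"
    and r: "r > 0"
    and greedy: "norm (H + r *\<^sub>R u) \<le> norm (H + r *\<^sub>R T) + r * \<epsilon>"
    and T: "T = (1/2) *\<^sub>R u + (1/2) *\<^sub>R T'"
  shows "k T - k T' \<le> \<epsilon>"
proof -
  interpret k: linear k by (fact k(1))
  have "k H + r * k u \<le> norm (H + r *\<^sub>R u)"
    using k(2)[of "H + r *\<^sub>R u"] by (simp add: k.add k.scale)
  also have "\<dots> \<le> k H + r * k T + r * \<epsilon>"
    using greedy k(3) by (simp add: k.add k.scale)
  finally have "r * k u \<le> r * (k T + \<epsilon>)"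
    by (simp add: algebra_simps)
  then have "k u - k T \<le> \<epsilon>"
    using r by (simp add: mult_le_cancel_left_pos)
  then show ?thesis
    using T by (simp add: k.add k.scale)
qed

lemma linear_le_on_closure_convex_hull:
  fixes k :: "'a::real_normed_vector \<Rightarrow> real"
  assumes "bounded_linear k" "\<And>v. v \<in> A \<Longrightarrow> k v \<le> c" "w \<in> closure (convex hull A)"
  shows "k w \<le> c"
proof -
  interpret k: bounded_linear k by (fact assms(1))
  have "convex hull A \<subseteq> k -` {..c}"
    by (rule hull_minimal) (use assms(2) in \<open>auto intro: convex_linear_vimage k.linear\<close>)
  moreover have "closed (k -` {..c})"
    by (intro closed_vimage closed_atMost k.continuous_on continuous_on_id)
  ultimately show ?thesis
    using closure_minimal assms(3) by blast
qed

lemma exists_greedy_tail_series: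
  fixes y :: "nat \<Rightarrow> 'a::banach" and \<epsilon> :: "nat \<Rightarrow> real"
  assumes bounded: "bounded (range y)" and \<epsilon>: "\<And>K. \<epsilon> K > 0"
  obtains u T H :: "nat \<Rightarrow> 'a" where
    "\<And>K. T K \<in> closure (convex hull (y ` {K..}))"
    "\<And>K. T K = (1/2::real) *\<^sub>R u K + (1/2::real) *\<^sub>R T (Suc K)"
    "\<And>K. T 0 = H K + (1/2::real) ^ K *\<^sub>R T K"
    "\<And>K. norm (H K + (1/2::real) ^ K *\<^sub>R u K) \<le> norm (H K + (1/2::real) ^ K *\<^sub>R T K) + \<epsilon> K"
proof -
  obtain B where B: "\<And>n. norm (y n) \<le> B"
    using bounded by (auto simp: bounded_iff)
  define C where "C K = convex hull (y ` {K..})" for K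
  have C_convex: "convex (C K)" and C_ne: "C K \<noteq> {}" for K
    by (simp_all add: C_def)
  have C_bounded: "C K \<subseteq> cball 0 B" for K
    unfolding C_def by (rule hull_minimal) (use B in \<open>auto simp: convex_cball\<close>)
  obtain u where u: "\<And>K. u K \<in> C K"
    and greedy: "\<And>K v. v \<in> closure (C K) \<Longrightarrow>
       norm ((\<Sum>j<K. (1/2::real) ^ Suc j *\<^sub>R u j) + (1/2) ^ K *\<^sub>R u K)
         \<le> norm ((\<Sum>j<K. (1/2::real) ^ Suc j *\<^sub>R u j) + (1/2) ^ K *\<^sub>R v) + \<epsilon> K"
    using exists_greedy_half_series[of C \<epsilon>, OF C_ne \<epsilon>] by blast
  have u_bounded: "norm (u j) \<le> B" for j
    using u C_bounded by (meson mem_cball_0 subsetD)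
  define T where "T K = (\<Sum>j. (1/2::real) ^ Suc j *\<^sub>R u (j + K))" for K
  define H where "H K = (\<Sum>j<K. (1/2::real) ^ Suc j *\<^sub>R u j)" for K
  have T_closure: "T K \<in> closure (C K)" for K
  proof -
    have "y ` {j + K..} \<subseteq> y ` {K..}" for j
      by auto
    then have "u (j + K) \<in> C K" for j
      using u[of "j + K"] hull_mono by (fastforce simp: C_def)
    then show ?thesis
      unfolding T_def by (rule half_series_in_closure[OF C_convex _ u_bounded])
  qed
  show ?thesis
  proof (rule that)
    show "T K \<in> closure (convex hull (y ` {K..}))" for K
      using T_closure by (simp add: C_def)
    show "T K = (1/2::real) *\<^sub>R u K + (1/2::real) *\<^sub>R T (Suc K)" for K
      unfolding T_def by (rule half_series_tail(1)[of u B, OF u_bounded])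
    show "T 0 = H K + (1/2::real) ^ K *\<^sub>R T K" for K
      unfolding T_def H_def by (rule half_series_tail(2)[of u B, OF u_bounded])
    show "norm (H K + (1/2::real) ^ K *\<^sub>R u K) \<le> norm (H K + (1/2::real) ^ K *\<^sub>R T K) + \<epsilon> K" for K
      unfolding H_def by (rule greedy[OF T_closure[of K]])
  qed
qed

lemma small_convex_combination_if_norming_functionals_vanish:
  fixes y :: "nat \<Rightarrow> 'a::banach"
  assumes bounded: "bounded (range y)"
    and norming: "\<And>z. \<exists>k. bounded_linear k \<and> (\<forall>v. k v \<le> norm v) \<and> k z = norm z \<and>
                          (\<lambda>n. k (y n)) \<longlonglongrightarrow> 0"
    and "\<beta> > 0"
  shows "\<exists>w\<in>convex hull (range y). norm w < \<beta>"
proof (rule ccontr)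
  assume "\<not> ?thesis"
  then have large: "convex hull (range y) \<subseteq> {w. \<beta> \<le> norm w}"
    by (auto simp: not_less)
  define \<epsilon> where "\<epsilon> K = \<beta> * (1/2) ^ (K + 2)" for K :: nat
  have \<epsilon>_pos: "(1/2) ^ K * \<epsilon> K > 0" for K
    using \<open>\<beta> > 0\<close> by (simp add: \<epsilon>_def)
  obtain T u H where T_closure: "\<And>K. T K \<in> closure (convex hull (y ` {K..}))"
    and T_Suc: "\<And>K. T K = (1/2::real) *\<^sub>R u K + (1/2::real) *\<^sub>R T (Suc K)"
    and T_0: "\<And>K. T 0 = H K + (1/2::real) ^ K *\<^sub>R T K"
    and greedy: "\<And>K. norm (H K + (1/2::real) ^ K *\<^sub>R u K)
                      \<le> norm (H K + (1/2::real) ^ K *\<^sub>R T K) + (1/2) ^ K * \<epsilon> K"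
    by (rule exists_greedy_tail_series[of y "\<lambda>K. (1/2) ^ K * \<epsilon> K", OF bounded \<epsilon>_pos]) (rule that)
  obtain k where k_lin: "bounded_linear k" and k_le: "\<And>v. k v \<le> norm v"
    and k_T0: "k (T 0) = norm (T 0)" and k_y: "(\<lambda>n. k (y n)) \<longlonglongrightarrow> 0"
    using norming[of "T 0"] by blast
  interpret k: bounded_linear k by (fact k_lin)
  have T_step: "k (T K) - k (T (Suc K)) \<le> \<epsilon> K" for K
    using k_T0 T_0[of K] greedy[of K] T_Suc[of K]
    by (intro norming_functional_step_le[OF k.linear k_le]) simp_all
  have T_telescope: "k (T 0) - k (T K) \<le> \<beta> / 2 * (1 - (1/2) ^ K)" for K
  proof (induction K)
    case (Suc K)
    then show ?case using T_step[of K] by (simp add: \<epsilon>_def algebra_simps)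
  qed simp
  have "closed {w::'a. \<beta> \<le> norm w}"
    by (intro closed_Collect_le continuous_intros)
  then have "\<beta> \<le> norm (T 0)"
    using closure_minimal[OF large] T_closure[of 0] by auto
  have k_T_large: "\<beta> / 2 \<le> k (T K)" for K
  proof -
    have "\<beta> / 2 * (1 - (1/2) ^ K) \<le> \<beta> / 2"
      using \<open>\<beta> > 0\<close> by (intro mult_left_le) auto
    then show ?thesis
      using T_telescope[of K] k_T0 \<open>\<beta> \<le> norm (T 0)\<close> by linarith
  qed
  obtain N where N: "\<And>n. n \<ge> N \<Longrightarrow> k (y n) < \<beta> / 4"
    using LIMSEQ_D[OF k_y, of "\<beta> / 4"] \<open>\<beta> > 0\<close> by (force simp: abs_less_iff)
  have "k (T N) \<le> \<beta> / 4"
    by (rule linear_le_on_closure_convex_hull[OF k_lin _ T_closure[of N]])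
      (use N in \<open>force intro: less_imp_le\<close>)
  then show False
    using k_T_large[of N] \<open>\<beta> > 0\<close> by simp
qed

lemma not_Cauchy_imp_separated_pairs:
  fixes s :: "nat \<Rightarrow> real"
  assumes "\<not> Cauchy s"
  obtains \<epsilon> p q where "\<epsilon> > 0" "\<And>j. j \<le> p j" "\<And>j. j \<le> q j" "\<And>j. \<epsilon> \<le> s (p j) - s (q j)"
proof -
  obtain \<epsilon> where \<epsilon>: "\<epsilon> > 0" and far: "\<And>M. \<exists>m\<ge>M. \<exists>n\<ge>M. \<epsilon> \<le> dist (s m) (s n)"
    using assms unfolding Cauchy_def by (meson not_less)
  have "\<exists>m\<ge>M. \<exists>n\<ge>M. \<epsilon> \<le> s m - s n" for M
    using far[of M] by (auto simp: dist_real_def abs_if split: if_splits)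
  then obtain p q where "\<And>j. j \<le> p j \<and> j \<le> q j \<and> \<epsilon> \<le> s (p j) - s (q j)"
    by metis
  with \<epsilon> that show ?thesis by blast
qed

lemma Cauchy_imp_diff_tendsto_zero:
  fixes s :: "nat \<Rightarrow> real"
  assumes "Cauchy s" "\<And>j. j \<le> p j" "\<And>j. j \<le> q j"
  shows "(\<lambda>j. s (p j) - s (q j)) \<longlonglongrightarrow> 0"
proof (rule LIMSEQ_I)
  fix r :: real assume "r > 0"
  then obtain M where "\<And>m n. m \<ge> M \<Longrightarrow> n \<ge> M \<Longrightarrow> dist (s m) (s n) < r"
    using assms(1) unfolding Cauchy_def by blast
  then show "\<exists>M. \<forall>j\<ge>M. norm (s (p j) - s (q j) - 0) < r"
    using assms(2,3) le_trans by (metis dist_real_def diff_zero real_norm_def)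
qed

text \<open>If \<open>f\<close> were not Cauchy along \<open>x\<close>, differences of far-apart terms would form
  a bounded sequence annihilated in the limit by \<open>\<Phi>\<close>, hence by the norming functionals,
  whose convex hull stays away from \<open>0\<close>.\<close>
lemma weakly_Cauchy_if_norming_functionals_vanish:
  fixes x :: "nat \<Rightarrow> 'a::banach" and \<Phi> :: "('a \<Rightarrow> real) set"
  assumes bounded: "bounded (range x)"
    and linear: "\<And>f. f \<in> \<Phi> \<Longrightarrow> linear f"
    and Cauchy: "\<And>f. f \<in> \<Phi> \<Longrightarrow> Cauchy (\<lambda>n. f (x n))"
    and norming: "\<And>z. \<exists>k. bounded_linear k \<and> (\<forall>v. k v \<le> norm v) \<and> k z = norm z \<and>
        (\<forall>y. bounded (range y) \<longrightarrow> (\<forall>f\<in>\<Phi>. (\<lambda>n. f (y n)) \<longlonglongrightarrow> 0) \<longrightarrow> (\<lambda>n. k (y n)) \<longlonglongrightarrow> 0)"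
  shows "weakly_Cauchy x"
  unfolding weakly_Cauchy_def
proof (intro allI impI)
  fix f :: "'a \<Rightarrow> real" assume "bounded_linear f"
  then interpret f: bounded_linear f .
  show "Cauchy (\<lambda>n. f (x n))"
  proof (rule ccontr)
    assume "\<not> Cauchy (\<lambda>n. f (x n))"
    then obtain \<epsilon> p q where \<epsilon>: "\<epsilon> > 0" and p: "\<And>j. j \<le> p j" and q: "\<And>j. j \<le> q j"
      and sep: "\<And>j. \<epsilon> \<le> f (x (p j)) - f (x (q j))"
      using not_Cauchy_imp_separated_pairs by blast
    define y where "y j = x (p j) - x (q j)" for j
    have "bounded (range (\<lambda>j. x (p j)))" "bounded (range (\<lambda>j. x (q j)))"
      using bounded by (auto intro: bounded_subset)
    then have y_bounded: "bounded (range y)"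
      unfolding y_def by (rule bounded_minus_comp)
    have y_vanish: "(\<lambda>n. g (y n)) \<longlonglongrightarrow> 0" if "g \<in> \<Phi>" for g
      using Cauchy_imp_diff_tendsto_zero[OF Cauchy[OF that] p q]
      by (simp add: y_def linear_diff[OF linear[OF that]])
    obtain K where K: "K > 0" "\<And>v. norm (f v) \<le> norm v * K"
      using f.pos_bounded by blast
    obtain w where w: "w \<in> convex hull (range y)" "norm w < \<epsilon> / K"
      using small_convex_combination_if_norming_functionals_vanish[OF y_bounded _ divide_pos_pos[OF \<epsilon> K(1)]]
        norming y_bounded y_vanish by metis
    have "convex hull (range y) \<subseteq> f -` {\<epsilon>..}"
      using sep by (intro hull_minimal convex_linear_vimage f.linear) (auto simp: y_def f.diff)
    then have "\<epsilon> \<le> norm w * K"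
      using w(1) K(2)[of w] by auto
    with w(2) K(1) show False
      by (simp add: field_simps)
  qed
qed

section \<open>Disjoint sequences of members of \<open>S\<close>\<close>

lemma compact_UNIV_fun:
  assumes "compact (UNIV :: 'b::topological_space set)"
  shows "compact (UNIV :: ('a \<Rightarrow> 'b) set)"
proof -
  have "compact_space (euclidean :: 'b topology)"
    using assms by (simp add: compact_space_def)
  then have "compact_space (product_topology (\<lambda>_::'a. euclidean :: 'b topology) UNIV)"
    by (simp add: compact_space_product_topology)
  then show ?thesis
    by (simp add: euclidean_product_topology compact_space_def)
qed

lemma continuous_on_product_coordinates2:
  "continuous_on A (\<lambda>Q :: 'i \<Rightarrow> 'j \<Rightarrow> 'b::topological_space. Q i j)"
proof -
  have "continuous_on UNIV (\<lambda>Q :: 'i \<Rightarrow> 'j \<Rightarrow> 'b. Q i j)"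
    by (rule continuous_on_compose2[of UNIV "\<lambda>p. p j"]) auto
  then show ?thesis
    by (rule continuous_on_subset) simp
qed

lemma closed_member_predicates:
  assumes "pointwise_closed S"
  shows "closed {(\<lambda>a. a \<in> s) | s. s \<in> insert {} S}"
proof -
  have "{\<lambda>a. False} = {p :: 'g \<Rightarrow> bool. \<forall>a. p a \<in> {False}}"
    by (auto simp: fun_eq_iff)
  also have "closed \<dots>"
    by (intro closed_Collect_all closed_vimage[of "{False}", unfolded vimage_def] closed_singleton
        continuous_on_product_coordinates)
  finally have False_closed: "closed {\<lambda>a::'g. False}" .
  have "(\<lambda>a. a \<in> {}) = (\<lambda>a::'g. False)"
    by simp
  then have "{(\<lambda>a. a \<in> s) | s. s \<in> insert {} S} = {\<lambda>a. False} \<union> {(\<lambda>a. a \<in> s) | s. s \<in> S}"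
    by blast
  then show ?thesis
    using closed_Un[OF False_closed assms[unfolded pointwise_closed_def]] by (simp only:)
qed

lemma closed_pairwise_disjoint_predicates:
  "closed {Q :: 'i \<Rightarrow> 'g \<Rightarrow> bool. \<forall>i j a. i \<noteq> j \<longrightarrow> \<not> (Q i a \<and> Q j a)}"
proof (intro closed_Collect_all)
  fix i j :: 'i and a :: 'g
  have "closed {Q :: 'i \<Rightarrow> 'g \<Rightarrow> bool. (Q i a, Q j a) \<in> - {(True, True)}}"
    using closed_vimage[OF finite_imp_closed[of "- {(True, True)}"]
        continuous_on_Pair[OF continuous_on_product_coordinates2 continuous_on_product_coordinates2]]
    by (simp add: vimage_def)
  then show "closed {Q :: 'i \<Rightarrow> 'g \<Rightarrow> bool. i \<noteq> j \<longrightarrow> \<not> (Q i a \<and> Q j a)}"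
    by (cases "i = j") simp_all
qed

lemma closed_disjoint_member_sequences:
  assumes "pointwise_closed S"
  shows "closed {(\<lambda>i a. a \<in> P i) | P :: nat \<Rightarrow> 'g set. (\<forall>i. P i \<in> insert {} S) \<and> disjoint_family P}"
    (is "closed ?K")
proof -
  define M where "M = {(\<lambda>a. a \<in> s) | s. s \<in> insert {} S}"
  define A1 where "A1 = {Q :: nat \<Rightarrow> 'g \<Rightarrow> bool. \<forall>i. Q i \<in> M}"
  define A2 where "A2 = {Q :: nat \<Rightarrow> 'g \<Rightarrow> bool. \<forall>i j a. i \<noteq> j \<longrightarrow> \<not> (Q i a \<and> Q j a)}"
  have K: "?K = A1 \<inter> A2"
  proof (intro equalityI subsetI)
    fix Q assume "Q \<in> ?K"
    then obtain P where Q: "Q = (\<lambda>i a. a \<in> P i)" and P: "\<forall>i. P i \<in> insert {} S" "disjoint_family P"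
      by blast
    have "Q \<in> A1"
      unfolding A1_def M_def Q using P(1) by blast
    moreover have "Q \<in> A2"
      using P(2) unfolding A2_def Q by (auto simp: disjoint_family_on_def)
    ultimately show "Q \<in> A1 \<inter> A2" by blast
  next
    fix Q :: "nat \<Rightarrow> 'g \<Rightarrow> bool"
    assume Q: "Q \<in> A1 \<inter> A2"
    have members: "{a. Q i a} \<in> insert {} S" for i
    proof -
      obtain s where "Q i = (\<lambda>a. a \<in> s)" "s \<in> insert {} S"
        using Q unfolding A1_def M_def by blast
      then show ?thesis by simp
    qed
    have disj: "disjoint_family (\<lambda>i. {a. Q i a})"
      using Q by (auto simp: A2_def disjoint_family_on_def)
    show "Q \<in> ?K"
      by (intro CollectI exI[of _ "\<lambda>i. {a. Q i a}"] conjI allI members disj) simp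
  qed
  have "closed A1"
    using closed_member_predicates[OF assms] unfolding A1_def
    by (intro closed_Collect_all closed_vimage[of M, unfolded vimage_def] continuous_on_product_coordinates)
      (simp add: M_def)
  with closed_pairwise_disjoint_predicates show ?thesis
    unfolding K A2_def by (intro closed_Int)
qed

lemma compact_disjoint_member_sequences:
  assumes "pointwise_closed S"
  shows "compact {(\<lambda>i a. a \<in> P i) | P :: nat \<Rightarrow> 'g set. (\<forall>i. P i \<in> insert {} S) \<and> disjoint_family P}"
proof -
  have "compact (UNIV :: (nat \<Rightarrow> 'g \<Rightarrow> bool) set)"
    by (intro compact_UNIV_fun finite_imp_compact) simp
  from compact_Int_closed[OF this closed_disjoint_member_sequences[OF assms]] show ?thesis
    by (simp only: Int_UNIV_left)
qed

text \<open>For disjoint \<open>F\<close> the union has at most one member: the set in \<open>F\<close> whose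
  first point in the enumeration \<open>en\<close> is \<open>en i\<close>.\<close>
definition first_hit_block :: "(nat \<Rightarrow> 'g) \<Rightarrow> 'g set set \<Rightarrow> nat \<Rightarrow> 'g set" where
  "first_hit_block en F i = \<Union>{s\<in>F. en i \<in> s \<and> (\<forall>j<i. en j \<notin> s)}"

lemma first_hit_block_eq:
  assumes "disjoint F" "s \<in> F" "en i \<in> s" "\<forall>j<i. en j \<notin> s"
  shows "first_hit_block en F i = s"
  using assms unfolding first_hit_block_def disjoint_def by blast

lemma first_hit_block_in:
  assumes "F \<subseteq> S" "disjoint F"
  shows "first_hit_block en F i \<in> insert {} S"
proof (cases "\<exists>s\<in>F. en i \<in> s \<and> (\<forall>j<i. en j \<notin> s)")
  case True
  then show ?thesis using first_hit_block_eq[OF assms(2)] assms(1) by auto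
qed (auto simp: first_hit_block_def)

lemma disjoint_family_first_hit_block:
  assumes "disjoint F"
  shows "disjoint_family (first_hit_block en F)"
  unfolding disjoint_family_on_def
proof (intro ballI impI)
  fix i j :: nat assume "i \<noteq> j"
  show "first_hit_block en F i \<inter> first_hit_block en F j = {}"
  proof (rule ccontr)
    assume "first_hit_block en F i \<inter> first_hit_block en F j \<noteq> {}"
    then obtain s t where "s \<in> F" "en i \<in> s" "\<forall>l<i. en l \<notin> s" "t \<in> F" "en j \<in> t" "\<forall>l<j. en l \<notin> t"
      "s \<inter> t \<noteq> {}"
      unfolding first_hit_block_def by blast
    with assms \<open>i \<noteq> j\<close> show False
      unfolding disjoint_def by (metis linorder_neqE_nat)
  qed
qed

lemma sum_hitting_le_sum_first_hit_blocks:
  fixes h :: "'g set \<Rightarrow> real"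
  assumes "finite F" "disjoint F" "\<And>s. 0 \<le> h s"
  shows "(\<Sum>s\<in>{s\<in>F. \<exists>i\<le>N. en i \<in> s}. h s) \<le> (\<Sum>i\<le>N. h (first_hit_block en F i))"
proof -
  define F1 where "F1 = {s\<in>F. \<exists>i\<le>N. en i \<in> s}"
  define idx where "idx s = (LEAST i. en i \<in> s)" for s
  have idx: "idx s \<le> N" "en (idx s) \<in> s" "\<forall>j<idx s. en j \<notin> s" if s: "s \<in> F1" for s
  proof -
    obtain i where "i \<le> N" "en i \<in> s" using s by (auto simp: F1_def)
    then show "idx s \<le> N" "en (idx s) \<in> s" "\<forall>j<idx s. en j \<notin> s"
      unfolding idx_def by (auto intro: LeastI Least_le[THEN order_trans] dest: not_less_Least)
  qed
  have block: "first_hit_block en F (idx s) = s" if "s \<in> F1" for s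
    using first_hit_block_eq[OF assms(2) _ idx(2,3)[OF that]] that by (simp add: F1_def)
  have "inj_on idx F1"
    by (metis block inj_onI)
  then have "(\<Sum>s\<in>F1. h s) = (\<Sum>i\<in>idx ` F1. h (first_hit_block en F i))"
    by (simp add: sum.reindex block)
  also have "\<dots> \<le> (\<Sum>i\<le>N. h (first_hit_block en F i))"
    by (rule sum_mono2) (use idx(1) assms(3) in auto)
  finally show ?thesis by (simp add: F1_def)
qed

lemma exists_enumeration_covering:
  fixes T :: "nat \<Rightarrow> 'g set"
  assumes "\<And>m. finite (T m)"
  obtains en :: "nat \<Rightarrow> 'g" and N where "\<And>m. T m \<subseteq> en ` {..N m}"
proof -
  \<comment> \<open>\<open>from_nat_into\<close> enumerates nonempty countable sets only, hence the extra point.\<close>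
  define en where "en = from_nat_into (insert undefined (\<Union>m. T m))"
  have "countable (\<Union>m. T m)"
    using assms by (auto intro: countable_finite)
  then have range_en: "T m \<subseteq> range en" for m
    by (auto simp: en_def)
  have "\<exists>N. T m \<subseteq> en ` {..N}" for m
  proof -
    obtain g where g: "\<And>b. b \<in> T m \<Longrightarrow> en (g b) = b"
      using range_en[of m] by (metis f_inv_into_f subsetD)
    have "g b \<le> Max (g ` T m)" if "b \<in> T m" for b
      using assms that by simp
    then show ?thesis
      using g by (intro exI[of _ "Max (g ` T m)"]) force
  qed
  then show ?thesis using that by metis
qed

section \<open>The James-\<open>S\<close> norm\<close>

lemma fin_supp_add: "fin_supp \<phi> \<Longrightarrow> fin_supp \<psi> \<Longrightarrow> fin_supp (\<lambda>a. \<phi> a + \<psi> a)"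
  unfolding fin_supp_def by (rule finite_subset[of _ "{a. \<phi> a \<noteq> 0} \<union> {a. \<psi> a \<noteq> 0}"]) auto

lemma fin_supp_scale: "fin_supp \<phi> \<Longrightarrow> fin_supp (\<lambda>a. c * \<phi> a)"
  unfolding fin_supp_def by (rule finite_subset[of _ "{a. \<phi> a \<noteq> 0}"]) auto

lemma fin_supp_diff: "fin_supp \<phi> \<Longrightarrow> fin_supp \<psi> \<Longrightarrow> fin_supp (\<lambda>a. \<phi> a - \<psi> a)"
  unfolding fin_supp_def by (rule finite_subset[of _ "{a. \<phi> a \<noteq> 0} \<union> {a. \<psi> a \<noteq> 0}"]) auto

lemma ssum_eq_sum_Int:
  assumes "finite T" "{a. \<phi> a \<noteq> 0} \<subseteq> T"
  shows "ssum \<phi> s = sum \<phi> (s \<inter> T)"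
  unfolding ssum_def by (rule sum.mono_neutral_left) (use assms in auto)

lemma ssum_add:
  assumes "fin_supp \<phi>" "fin_supp \<psi>"
  shows "ssum (\<lambda>a. \<phi> a + \<psi> a) s = ssum \<phi> s + ssum \<psi> s"
proof -
  define T where "T = {a. \<phi> a \<noteq> 0} \<union> {a. \<psi> a \<noteq> 0}"
  have T: "finite T" using assms by (simp add: T_def fin_supp_def)
  have "ssum (\<lambda>a. \<phi> a + \<psi> a) s = sum (\<lambda>a. \<phi> a + \<psi> a) (s \<inter> T)"
    by (rule ssum_eq_sum_Int[OF T]) (auto simp: T_def)
  also have "\<dots> = sum \<phi> (s \<inter> T) + sum \<psi> (s \<inter> T)"
    by (rule sum.distrib)
  also have "\<dots> = ssum \<phi> s + ssum \<psi> s"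
    using ssum_eq_sum_Int[OF T, of \<phi>] ssum_eq_sum_Int[OF T, of \<psi>] by (auto simp: T_def)
  finally show ?thesis .
qed

lemma ssum_scale:
  assumes "fin_supp \<phi>"
  shows "ssum (\<lambda>a. c * \<phi> a) s = c * ssum \<phi> s"
proof -
  have T: "finite {a. \<phi> a \<noteq> 0}" using assms by (simp add: fin_supp_def)
  have "ssum (\<lambda>a. c * \<phi> a) s = sum (\<lambda>a. c * \<phi> a) (s \<inter> {a. \<phi> a \<noteq> 0})"
    by (rule ssum_eq_sum_Int[OF T]) auto
  then show ?thesis by (simp add: ssum_def sum_distrib_left)
qed

lemma ssum_empty [simp]: "ssum \<phi> {} = 0"
  by (simp add: ssum_def)

definition disjoint_subfamilies :: "'g set set \<Rightarrow> 'g set set set" where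
  "disjoint_subfamilies S = {F. finite F \<and> F \<subseteq> S \<and> disjoint F}"

lemma disjoint_subfamilies_empty [simp]: "{} \<in> disjoint_subfamilies S"
  by (simp add: disjoint_subfamilies_def)

lemma disjoint_subfamilies_subset:
  "F \<in> disjoint_subfamilies S \<Longrightarrow> G \<subseteq> F \<Longrightarrow> G \<in> disjoint_subfamilies S"
  unfolding disjoint_subfamilies_def by (auto intro: finite_subset pairwise_subset)

lemma sum_Int_disjoint_le:
  fixes w :: "'a \<Rightarrow> real"
  assumes "finite F" "disjoint F" "finite T" "\<And>a. 0 \<le> w a"
  shows "(\<Sum>s\<in>F. sum w (s \<inter> T)) \<le> sum w T"
proof -
  have "(\<Sum>s\<in>F. sum w (s \<inter> T)) = sum w (\<Union>s\<in>F. s \<inter> T)"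
    by (rule sum.UNION_disjoint[symmetric]) (use assms in \<open>auto simp: disjoint_def\<close>)
  also have "\<dots> \<le> sum w T"
    by (rule sum_mono2) (use assms in auto)
  finally show ?thesis .
qed

lemma bdd_above_jnorm_values:
  assumes "fin_supp \<phi>"
  shows "bdd_above ((\<lambda>F. sqrt (\<Sum>s\<in>F. (ssum \<phi> s)\<^sup>2)) ` disjoint_subfamilies S)"
proof (rule bdd_aboveI2)
  define T where "T = {a. \<phi> a \<noteq> 0}"
  define M where "M = (\<Sum>a\<in>T. \<bar>\<phi> a\<bar>)"
  have T: "finite T" using assms by (simp add: T_def fin_supp_def)
  have M: "0 \<le> M" by (simp add: M_def sum_nonneg)
  have ssum_le: "\<bar>ssum \<phi> s\<bar> \<le> sum (\<lambda>a. \<bar>\<phi> a\<bar>) (s \<inter> T)" for s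
    unfolding ssum_def T_def by (simp add: Int_commute)
  have ssum_le_M: "\<bar>ssum \<phi> s\<bar> \<le> M" for s
    using ssum_le[of s] sum_mono2[OF T, of "s \<inter> T" "\<lambda>a. \<bar>\<phi> a\<bar>"] by (auto simp: M_def)
  fix F assume "F \<in> disjoint_subfamilies S"
  then have F: "finite F" "disjoint F" by (auto simp: disjoint_subfamilies_def)
  have "(\<Sum>s\<in>F. (ssum \<phi> s)\<^sup>2) \<le> (\<Sum>s\<in>F. M * sum (\<lambda>a. \<bar>\<phi> a\<bar>) (s \<inter> T))"
  proof (rule sum_mono)
    fix s
    have "(ssum \<phi> s)\<^sup>2 = \<bar>ssum \<phi> s\<bar> * \<bar>ssum \<phi> s\<bar>"
      by (simp add: power2_eq_square)
    also have "\<dots> \<le> M * sum (\<lambda>a. \<bar>\<phi> a\<bar>) (s \<inter> T)"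
      by (rule mult_mono[OF ssum_le_M ssum_le M abs_ge_zero])
    finally show "(ssum \<phi> s)\<^sup>2 \<le> M * sum (\<lambda>a. \<bar>\<phi> a\<bar>) (s \<inter> T)" .
  qed
  also have "\<dots> \<le> M * M"
    unfolding sum_distrib_left[symmetric] M_def
    by (intro mult_left_mono sum_Int_disjoint_le F T sum_nonneg) auto
  finally have "(\<Sum>s\<in>F. (ssum \<phi> s)\<^sup>2) \<le> M\<^sup>2"
    by (simp add: power2_eq_square)
  then show "sqrt (\<Sum>s\<in>F. (ssum \<phi> s)\<^sup>2) \<le> M"
    by (rule real_le_lsqrt[OF M])
qed

lemma sum_sq_ssum_le_jnorm:
  assumes "fin_supp \<phi>" "F \<in> disjoint_subfamilies S"
  shows "(\<Sum>s\<in>F. (ssum \<phi> s)\<^sup>2) \<le> (jnorm S \<phi>)\<^sup>2"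
proof -
  have "sqrt (\<Sum>s\<in>F. (ssum \<phi> s)\<^sup>2) \<le> jnorm S \<phi>"
    unfolding jnorm_def disjoint_subfamilies_def[symmetric]
    by (rule cSUP_upper[OF assms(2) bdd_above_jnorm_values[OF assms(1)]])
  then show ?thesis by (rule sqrt_le_D)
qed

lemma exists_family_near_jnorm:
  assumes "fin_supp \<phi>" "e > 0"
  shows "\<exists>F\<in>disjoint_subfamilies S. jnorm S \<phi> - e < sqrt (\<Sum>s\<in>F. (ssum \<phi> s)\<^sup>2)"
proof -
  have "jnorm S \<phi> - e < jnorm S \<phi>" using assms(2) by simp
  then show ?thesis
    unfolding jnorm_def disjoint_subfamilies_def[symmetric]
    using less_cSUP_iff[OF _ bdd_above_jnorm_values[OF assms(1)]] disjoint_subfamilies_empty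
    by blast
qed

section \<open>The functionals \<open>s\<^sup>*\<close> and norming functionals\<close>

locale JS_completion =
  fixes S :: "'g set set" and E :: "('g \<Rightarrow> real) \<Rightarrow> 'x::banach"
  assumes completion: "is_JS_completion S E"
begin

lemma E_add: "fin_supp \<phi> \<Longrightarrow> fin_supp \<psi> \<Longrightarrow> E (\<lambda>a. \<phi> a + \<psi> a) = E \<phi> + E \<psi>"
  using completion by (simp add: is_JS_completion_def)

lemma E_scale: "fin_supp \<phi> \<Longrightarrow> E (\<lambda>a. c * \<phi> a) = c *\<^sub>R E \<phi>"
  using completion by (simp add: is_JS_completion_def)

lemma norm_E: "fin_supp \<phi> \<Longrightarrow> norm (E \<phi>) = jnorm S \<phi>"
  using completion by (simp add: is_JS_completion_def)

lemma closure_E_fin_supp: "closure (E ` {\<phi>. fin_supp \<phi>}) = UNIV"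
  using completion by (simp add: is_JS_completion_def)

lemma E_diff: "fin_supp \<phi> \<Longrightarrow> fin_supp \<psi> \<Longrightarrow> E (\<lambda>a. \<phi> a - \<psi> a) = E \<phi> - E \<psi>"
  using E_add[of \<phi> "\<lambda>a. (-1) * \<psi> a"] E_scale[of \<psi> "-1"] fin_supp_scale[of \<psi> "-1"] by simp

lemma E_dense_induct:
  assumes "closed {x. P x}" "\<And>\<phi>. fin_supp \<phi> \<Longrightarrow> P (E \<phi>)"
  shows "P x"
  using closure_minimal[of "E ` {\<phi>. fin_supp \<phi>}" "{x. P x}"] assms closure_E_fin_supp by auto

lemma approx_by_E:
  assumes "e > 0"
  obtains \<phi> where "fin_supp \<phi>" "norm (x - E \<phi>) < e"
proof -
  have "x \<in> closure (E ` {\<phi>. fin_supp \<phi>})" using closure_E_fin_supp by simp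
  then obtain v where "v \<in> E ` {\<phi>. fin_supp \<phi>}" "dist v x < e"
    using assms closure_approachable by blast
  then show ?thesis using that by (auto simp: dist_norm norm_minus_commute)
qed

lemma E_approximating_sequence:
  obtains \<phi> where "\<And>k. fin_supp (\<phi> k)" "\<And>k. norm (x - E (\<phi> k)) < inverse (real (Suc k))"
proof -
  have "\<exists>\<phi>. fin_supp \<phi> \<and> norm (x - E \<phi>) < inverse (real (Suc k))" for k
    by (rule approx_by_E[of "inverse (real (Suc k))"]) auto
  then show ?thesis using that by metis
qed

lemma exists_continuous_extension:
  fixes l :: "('g \<Rightarrow> real) \<Rightarrow> real"
  assumes lip: "\<And>\<phi> \<psi>. fin_supp \<phi> \<Longrightarrow> fin_supp \<psi> \<Longrightarrow> \<bar>l \<phi> - l \<psi>\<bar> \<le> norm (E \<phi> - E \<psi>)"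
  shows "\<exists>g. continuous_on UNIV g \<and> (\<forall>\<phi>. fin_supp \<phi> \<longrightarrow> g (E \<phi>) = l \<phi>)"
proof -
  define D where "D = E ` {\<phi>. fin_supp \<phi>}"
  define h where "h v = l (SOME \<phi>. fin_supp \<phi> \<and> E \<phi> = v)" for v
  have h: "h (E \<phi>) = l \<phi>" if "fin_supp \<phi>" for \<phi>
  proof -
    have "fin_supp (SOME \<psi>. fin_supp \<psi> \<and> E \<psi> = E \<phi>) \<and> E (SOME \<psi>. fin_supp \<psi> \<and> E \<psi> = E \<phi>) = E \<phi>"
      by (rule someI[of _ \<phi>]) (use that in simp)
    then show ?thesis
      using lip[OF _ that, of "SOME \<psi>. fin_supp \<psi> \<and> E \<psi> = E \<phi>"] by (simp add: h_def)
  qed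
  have "uniformly_continuous_on D h"
    unfolding uniformly_continuous_on_def
  proof (intro allI impI)
    fix e :: real assume "e > 0"
    have "dist (h v) (h w) < e" if "v \<in> D" "w \<in> D" "dist v w < e" for v w
      using that lip h by (force simp: D_def dist_norm dist_real_def)
    with \<open>e > 0\<close> show "\<exists>d>0. \<forall>w\<in>D. \<forall>v\<in>D. dist v w < d \<longrightarrow> dist (h v) (h w) < e"
      by blast
  qed
  then obtain g where g: "uniformly_continuous_on (closure D) g" "\<And>x. x \<in> D \<Longrightarrow> h x = g x"
    using uniformly_continuous_on_extension_on_closure by metis
  have "continuous_on UNIV g"
    using uniformly_continuous_imp_continuous[OF g(1)] closure_E_fin_supp by (simp add: D_def)
  moreover have "g (E \<phi>) = l \<phi>" if "fin_supp \<phi>" for \<phi>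
    using g(2)[of "E \<phi>"] h[OF that] that by (auto simp: D_def)
  ultimately show ?thesis by blast
qed

lemma exists_bounded_linear_extension:
  fixes l :: "('g \<Rightarrow> real) \<Rightarrow> real"
  assumes add: "\<And>\<phi> \<psi>. fin_supp \<phi> \<Longrightarrow> fin_supp \<psi> \<Longrightarrow> l (\<lambda>a. \<phi> a + \<psi> a) = l \<phi> + l \<psi>"
    and scale: "\<And>\<phi> c. fin_supp \<phi> \<Longrightarrow> l (\<lambda>a. c * \<phi> a) = c * l \<phi>"
    and bound: "\<And>\<phi>. fin_supp \<phi> \<Longrightarrow> \<bar>l \<phi>\<bar> \<le> norm (E \<phi>)"
  shows "\<exists>g. bounded_linear g \<and> (\<forall>\<phi>. fin_supp \<phi> \<longrightarrow> g (E \<phi>) = l \<phi>)"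
proof -
  have "\<bar>l \<phi> - l \<psi>\<bar> \<le> norm (E \<phi> - E \<psi>)" if "fin_supp \<phi>" "fin_supp \<psi>" for \<phi> \<psi>
    using bound[OF fin_supp_diff[OF that]] E_diff[OF that] that
      add[of \<psi> "\<lambda>a. \<phi> a - \<psi> a"] fin_supp_diff[OF that] by simp
  then obtain g where g_cont: "continuous_on UNIV g" and g_E: "\<And>\<phi>. fin_supp \<phi> \<Longrightarrow> g (E \<phi>) = l \<phi>"
    using exists_continuous_extension by blast
  have closed_eq: "closed {x. f1 x = f2 x}" if "continuous_on UNIV f1" "continuous_on UNIV f2"
    for f1 f2 :: "'x \<Rightarrow> real"
    using closed_Collect_eq[OF that] by simp
  have g_add_E: "g (x + E \<psi>) = g x + g (E \<psi>)" if "fin_supp \<psi>" for x \<psi>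
    by (rule E_dense_induct[OF closed_eq])
      (auto intro!: continuous_intros continuous_on_compose2[OF g_cont]
        simp: E_add[symmetric] g_E fin_supp_add that add)
  have "bounded_linear g"
  proof (rule bounded_linear_intro[of _ 1])
    show "g (x + y) = g x + g y" for x y
      by (rule E_dense_induct[OF closed_eq])
        (auto intro!: continuous_intros continuous_on_compose2[OF g_cont] simp: g_add_E)
    show "g (c *\<^sub>R x) = c *\<^sub>R g x" for c x
      by (rule E_dense_induct[OF closed_eq])
        (auto intro!: continuous_intros continuous_on_compose2[OF g_cont]
          simp: E_scale[symmetric] g_E fin_supp_scale scale)
    show "norm (g x) \<le> norm x * 1" for x
      by (rule E_dense_induct) (auto intro!: closed_Collect_le continuous_intros
          continuous_on_compose2[OF g_cont] simp: g_E bound)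
  qed
  then show ?thesis using g_E by blast
qed

lemma abs_ssum_le_norm_E:
  assumes "s \<in> insert {} S" "fin_supp \<phi>"
  shows "\<bar>ssum \<phi> s\<bar> \<le> norm (E \<phi>)"
proof (cases "s = {}")
  case False
  then have "{s} \<in> disjoint_subfamilies S"
    using assms(1) by (simp add: disjoint_subfamilies_def)
  from sum_sq_ssum_le_jnorm[OF assms(2) this] have "(ssum \<phi> s)\<^sup>2 \<le> (norm (E \<phi>))\<^sup>2"
    by (simp add: norm_E[OF assms(2)])
  then show ?thesis
    using real_sqrt_le_mono by fastforce
qed simp

text \<open>Such a functional exists for \<open>s \<in> insert {} S\<close> (below); for other \<open>s\<close> the choice is
  arbitrary and never used.\<close>
definition star :: "'g set \<Rightarrow> 'x \<Rightarrow> real" where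
  "star s = (SOME f. is_s_star S E s f)"

lemma is_s_star_star:
  assumes "s \<in> insert {} S"
  shows "is_s_star S E s (star s)"
proof -
  have "\<exists>f. bounded_linear f \<and> (\<forall>\<phi>. fin_supp \<phi> \<longrightarrow> f (E \<phi>) = ssum \<phi> s)"
    by (rule exists_bounded_linear_extension) (auto simp: ssum_add ssum_scale abs_ssum_le_norm_E[OF assms])
  then have "\<exists>f. is_s_star S E s f"
    by (simp add: is_s_star_def)
  then show ?thesis
    unfolding star_def by (rule someI_ex)
qed

lemma bounded_linear_star: "s \<in> insert {} S \<Longrightarrow> bounded_linear (star s)"
  using is_s_star_star by (simp add: is_s_star_def)

lemma star_E: "s \<in> insert {} S \<Longrightarrow> fin_supp \<phi> \<Longrightarrow> star s (E \<phi>) = ssum \<phi> s"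
  using is_s_star_star by (simp add: is_s_star_def)

lemma continuous_on_star: "s \<in> insert {} S \<Longrightarrow> continuous_on A (star s)"
  by (rule linear_continuous_on[OF bounded_linear_star])

lemma star_empty [simp]: "star {} x = 0"
  by (rule E_dense_induct) (auto intro: closed_Collect_eq continuous_on_star simp: star_E)

lemma abs_star_le: "s \<in> insert {} S \<Longrightarrow> \<bar>star s x\<bar> \<le> norm x"
  by (rule E_dense_induct)
    (auto intro!: closed_Collect_le continuous_intros continuous_on_star
      simp: star_E abs_ssum_le_norm_E)

lemma sum_sq_star_le:
  assumes "F \<in> disjoint_subfamilies S"
  shows "(\<Sum>s\<in>F. (star s x)\<^sup>2) \<le> (norm x)\<^sup>2"
proof -
  have F: "s \<in> insert {} S" if "s \<in> F" for s
    using assms that by (auto simp: disjoint_subfamilies_def)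
  show ?thesis
  proof (rule E_dense_induct)
    show "closed {x. (\<Sum>s\<in>F. (star s x)\<^sup>2) \<le> (norm x)\<^sup>2}"
      by (auto intro!: closed_Collect_le continuous_intros continuous_on_star F)
    show "(\<Sum>s\<in>F. (star s (E \<phi>))\<^sup>2) \<le> (norm (E \<phi>))\<^sup>2" if "fin_supp \<phi>" for \<phi>
      using sum_sq_ssum_le_jnorm[OF that assms]
      by (simp add: star_E[OF F that] norm_E[OF that])
  qed
qed

lemma sum_sq_star_sequence_le:
  fixes P :: "nat \<Rightarrow> 'g set"
  assumes P: "\<And>i. P i \<in> insert {} S" and disj: "disjoint_family P"
  shows "(\<Sum>i<n. (star (P i) v)\<^sup>2) \<le> (norm v)\<^sup>2"
proof -
  define I where "I = {i. i < n \<and> P i \<noteq> {}}"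
  have "inj_on P I"
    using disj by (auto simp: I_def inj_on_def disjoint_family_on_def)
  moreover have "P ` I \<in> disjoint_subfamilies S"
    unfolding disjoint_subfamilies_def
  proof (intro CollectI conjI)
    show "finite (P ` I)"
      by (simp add: I_def)
    show "P ` I \<subseteq> S" using P by (auto simp: I_def)
    show "disjoint (P ` I)"
      by (rule disjoint_family_on_disjoint_image[OF disjoint_family_on_mono[OF _ disj]]) simp
  qed
  ultimately have "(\<Sum>i\<in>I. (star (P i) v)\<^sup>2) \<le> (norm v)\<^sup>2"
    using sum_sq_star_le[of "P ` I" v] by (simp add: sum.reindex)
  moreover have "(\<Sum>i<n. (star (P i) v)\<^sup>2) = (\<Sum>i\<in>I. (star (P i) v)\<^sup>2)"
    by (rule sum.mono_neutral_right) (auto simp: I_def)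
  ultimately show ?thesis by simp
qed

lemma exists_family_L2_set_star_gt:
  assumes "e > 0"
  shows "\<exists>F\<in>disjoint_subfamilies S. norm x - e < L2_set (\<lambda>s. star s x) F"
proof -
  obtain \<phi> where \<phi>: "fin_supp \<phi>" "norm (x - E \<phi>) < e / 3"
    using approx_by_E[of "e / 3"] assms by auto
  obtain F where F: "F \<in> disjoint_subfamilies S" "jnorm S \<phi> - e / 3 < sqrt (\<Sum>s\<in>F. (ssum \<phi> s)\<^sup>2)"
    using exists_family_near_jnorm[OF \<phi>(1), of "e / 3" S] assms by auto
  have FS: "s \<in> insert {} S" if "s \<in> F" for s
    using F(1) that by (auto simp: disjoint_subfamilies_def)
  have "sqrt (\<Sum>s\<in>F. (ssum \<phi> s)\<^sup>2) = L2_set (\<lambda>s. star s x + star s (E \<phi> - x)) F"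
    unfolding L2_set_def using FS
    by (auto intro!: arg_cong[where f = sqrt] sum.cong
        simp: star_E[OF _ \<phi>(1)] linear_diff[OF bounded_linear.linear[OF bounded_linear_star]])
  also have "\<dots> \<le> L2_set (\<lambda>s. star s x) F + L2_set (\<lambda>s. star s (E \<phi> - x)) F"
    by (rule L2_set_triangle_ineq)
  also have "L2_set (\<lambda>s. star s (E \<phi> - x)) F \<le> norm (E \<phi> - x)"
    unfolding L2_set_def by (rule real_le_lsqrt[OF norm_ge_zero sum_sq_star_le[OF F(1)]])
  finally have "jnorm S \<phi> - e / 3 < L2_set (\<lambda>s. star s x) F + norm (x - E \<phi>)"
    using F(2) by (simp add: norm_minus_commute)
  moreover have "norm x \<le> jnorm S \<phi> + norm (x - E \<phi>)"
    using norm_triangle_sub[of x "E \<phi>"] norm_E[OF \<phi>(1)] by simp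
  ultimately show ?thesis
    using F(1) \<phi>(2) by force
qed

lemma exists_family_sum_sq_star_gt:
  assumes "e > 0"
  shows "\<exists>F\<in>disjoint_subfamilies S. (norm x)\<^sup>2 - e < (\<Sum>s\<in>F. (star s x)\<^sup>2)"
proof (cases "(norm x)\<^sup>2 < e")
  case True
  then show ?thesis by (intro bexI[of _ "{}"]) auto
next
  case False
  define a where "a = sqrt ((norm x)\<^sup>2 - e)"
  have a: "0 \<le> a" "a < norm x"
    using False assms by (auto simp: a_def real_sqrt_less_iff intro!: real_less_lsqrt)
  obtain F where F: "F \<in> disjoint_subfamilies S" "norm x - (norm x - a) < L2_set (\<lambda>s. star s x) F"
    using exists_family_L2_set_star_gt[of "norm x - a" x] a by auto
  then have "a\<^sup>2 < (L2_set (\<lambda>s. star s x) F)\<^sup>2"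
    using a(1) by (intro power_strict_mono) auto
  then show ?thesis
    using F(1) False by (auto simp: a_def L2_set_def sum_nonneg)
qed

lemma continuous_on_star_member:
  "continuous_on {(\<lambda>a. a \<in> s) | s. s \<in> insert {} S} (\<lambda>p. star {a. p a} x)"
proof -
  define A where "A = {(\<lambda>a. a \<in> s) | s. s \<in> insert {} S}"
  obtain \<phi> where \<phi>: "\<And>k. fin_supp (\<phi> k)" "\<And>k. norm (x - E (\<phi> k)) < inverse (real (Suc k))"
    using E_approximating_sequence by blast
  text \<open>On member predicates, \<open>star {a. p a} (E (\<phi> k))\<close> depends on finitely many
    coordinates of \<open>p\<close> only.\<close>
  define c where "c k p = (\<Sum>a\<in>{a. \<phi> k a \<noteq> 0}. if p a then \<phi> k a else 0)" for k and p :: "'g \<Rightarrow> bool"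
  have c_star: "c k p = star {a. p a} (E (\<phi> k))" if "p \<in> A" for k p
  proof -
    have "star {a. p a} (E (\<phi> k)) = sum (\<phi> k) ({a. p a} \<inter> {a. \<phi> k a \<noteq> 0})"
      using that star_E[OF _ \<phi>(1)] by (auto simp: A_def ssum_def)
    also have "\<dots> = c k p"
      using \<phi>(1)[of k] by (simp add: c_def fin_supp_def sum.If_cases Int_commute)
    finally show ?thesis ..
  qed
  have "continuous_on UNIV (\<lambda>p::'g \<Rightarrow> bool. if p a then r else 0)" for r :: real and a
    using continuous_on_compose2[OF Topological_Spaces.continuous_on_discrete[of UNIV "\<lambda>b. if b then r else 0"]
        continuous_on_product_coordinates[of a]] by simp
  then have "continuous_on A (\<lambda>p::'g \<Rightarrow> bool. if p a then r else 0)" for r :: real and a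
    by (rule continuous_on_subset) simp
  then have "continuous_on A (c k)" for k
    unfolding c_def by (intro continuous_on_sum) simp
  moreover have "uniform_limit A c (\<lambda>p. star {a. p a} x) sequentially"
    unfolding uniform_limit_iff
  proof (intro allI impI)
    fix e :: real assume "e > 0"
    then obtain N where N: "inverse (real (Suc N)) < e"
      using reals_Archimedean by blast
    have "dist (c k p) (star {a. p a} x) < e" if "N \<le> k" "p \<in> A" for k p
    proof -
      have p: "{a. p a} \<in> insert {} S" using that(2) by (auto simp: A_def)
      have "dist (c k p) (star {a. p a} x) = \<bar>star {a. p a} (E (\<phi> k) - x)\<bar>"
        using linear_diff[OF bounded_linear.linear[OF bounded_linear_star[OF p]]] c_star[OF that(2)]
        by (simp add: dist_real_def)
      also have "\<dots> \<le> norm (E (\<phi> k) - x)" by (rule abs_star_le[OF p])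
      also have "\<dots> < inverse (real (Suc k))" using \<phi>(2)[of k] by (simp add: norm_minus_commute)
      also have "\<dots> \<le> inverse (real (Suc N))" using that(1) by (simp add: le_imp_inverse_le)
      finally show ?thesis using N by simp
    qed
    then show "\<forall>\<^sub>F k in sequentially. \<forall>p\<in>A. dist (c k p) (star {a. p a} x) < e"
      by (auto intro: eventually_sequentiallyI[of N])
  qed
  ultimately show ?thesis
    unfolding A_def[symmetric] by (intro uniform_limit_theorem[of A c]) auto
qed

lemma sum_sq_star_le_blocks:
  assumes F: "F \<in> disjoint_subfamilies S" and \<phi>: "fin_supp \<phi>" "{a. \<phi> a \<noteq> 0} \<subseteq> en ` {..N}"
  shows "(\<Sum>s\<in>F. (star s x)\<^sup>2) \<le> (\<Sum>i\<le>N. (star (first_hit_block en F i) x)\<^sup>2) + (norm (x - E \<phi>))\<^sup>2"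
proof -
  have fin: "finite F" and disj: "disjoint F" and FS: "F \<subseteq> S"
    using F by (auto simp: disjoint_subfamilies_def)
  define F1 where "F1 = {s\<in>F. \<exists>i\<le>N. en i \<in> s}"
  have "F1 \<subseteq> F" by (auto simp: F1_def)
  then have "(\<Sum>s\<in>F. (star s x)\<^sup>2) = (\<Sum>s\<in>F1. (star s x)\<^sup>2) + (\<Sum>s\<in>F - F1. (star s x)\<^sup>2)"
    using sum.subset_diff[of F1 F] fin by (simp add: add.commute)
  also have "(\<Sum>s\<in>F1. (star s x)\<^sup>2) \<le> (\<Sum>i\<le>N. (star (first_hit_block en F i) x)\<^sup>2)"
    unfolding F1_def by (rule sum_hitting_le_sum_first_hit_blocks[OF fin disj]) simp
  also have "(\<Sum>s\<in>F - F1. (star s x)\<^sup>2) \<le> (norm (x - E \<phi>))\<^sup>2"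
  proof -
    text \<open>Sets missing every enumerated point up to \<open>N\<close> miss the support of \<open>\<phi>\<close>.\<close>
    have "star s x = star s (x - E \<phi>)" if "s \<in> F - F1" for s
    proof -
      have s: "s \<in> insert {} S" using that FS by auto
      have "s \<inter> {a. \<phi> a \<noteq> 0} = {}"
        using that \<phi>(2) by (auto simp: F1_def)
      then have "star s (E \<phi>) = 0"
        by (simp add: star_E[OF s \<phi>(1)] ssum_def)
      then show ?thesis
        using linear_diff[OF bounded_linear.linear[OF bounded_linear_star[OF s]]] by simp
    qed
    then have "(\<Sum>s\<in>F - F1. (star s x)\<^sup>2) = (\<Sum>s\<in>F - F1. (star s (x - E \<phi>))\<^sup>2)"
      by simp
    also have "\<dots> \<le> (norm (x - E \<phi>))\<^sup>2"
      by (rule sum_sq_star_le[OF disjoint_subfamilies_subset[OF F]]) auto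
    finally show ?thesis .
  qed
  finally show ?thesis by simp
qed

text \<open>The compactness step: families nearly attaining the norm, listed by first hits of
  a common enumeration of the supports of the \<open>\<phi> m\<close>, accumulate at a disjoint sequence.\<close>
lemma exists_disjoint_sequence_near_norm:
  assumes "pointwise_closed S"
    and \<phi>: "\<And>m. fin_supp (\<phi> m)" "\<And>m. (norm (x - E (\<phi> m)))\<^sup>2 \<le> inverse (real (Suc m))"
    and N: "\<And>m. {a. \<phi> m a \<noteq> 0} \<subseteq> en ` {..N m}"
  obtains P :: "nat \<Rightarrow> 'g set" where "\<And>i. P i \<in> insert {} S" "disjoint_family P"
    "\<And>m. (norm x)\<^sup>2 - 2 * inverse (real (Suc m)) \<le> (\<Sum>i\<le>N m. (star (P i) x)\<^sup>2)"
proof -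
  define K where "K = {(\<lambda>i a. a \<in> P i) | P :: nat \<Rightarrow> 'g set. (\<forall>i. P i \<in> insert {} S) \<and> disjoint_family P}"
  define G where "G m = {Q \<in> K. (norm x)\<^sup>2 - 2 * inverse (real (Suc m)) \<le> (\<Sum>i\<le>N m. (star {a. Q i a} x)\<^sup>2)}"
    for m
  have "(\<lambda>Q. Q i) ` K \<subseteq> {(\<lambda>a. a \<in> s) | s. s \<in> insert {} S}" for i
    unfolding K_def by blast
  then have "continuous_on K (\<lambda>Q. star {a. Q i a} x)" for i
    using continuous_on_compose2[OF continuous_on_star_member
        continuous_on_subset[OF continuous_on_product_coordinates[of i], of K]] by simp
  then have G_closed: "closed (G m)" for m
    unfolding G_def using closed_disjoint_member_sequences[OF assms(1)]
    by (intro continuous_on_closed_Collect_le continuous_intros) (simp_all add: K_def)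
  have blocks_in_G: "(\<lambda>i a. a \<in> first_hit_block en F i) \<in> G m"
    if F: "F \<in> disjoint_subfamilies S" and near: "(norm x)\<^sup>2 - inverse (real (Suc m)) < (\<Sum>s\<in>F. (star s x)\<^sup>2)"
    for F m
  proof -
    have "F \<subseteq> S" "disjoint F" using F by (auto simp: disjoint_subfamilies_def)
    then have "(\<lambda>i a. a \<in> first_hit_block en F i) \<in> K"
      unfolding K_def using first_hit_block_in disjoint_family_first_hit_block by blast
    then show ?thesis
      using sum_sq_star_le_blocks[OF F \<phi>(1)[of m] N[of m], where x = x] \<phi>(2)[of m] near
      by (simp add: G_def)
  qed
  have "K \<inter> (\<Inter>m. G m) \<noteq> {}"
  proof (rule compact_imp_fip_image[OF _ G_closed])
    show "compact K"
      using compact_disjoint_member_sequences[OF assms(1)] by (simp add: K_def)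
    fix I :: "nat set" assume "finite I"
    define m0 where "m0 = Max (insert 0 I)"
    obtain F where F: "F \<in> disjoint_subfamilies S"
      and near: "(norm x)\<^sup>2 - inverse (real (Suc m0)) < (\<Sum>s\<in>F. (star s x)\<^sup>2)"
      using exists_family_sum_sq_star_gt[of "inverse (real (Suc m0))" x] by auto
    have m0_le: "inverse (real (Suc m0)) \<le> inverse (real (Suc m))" if "m \<in> I" for m
      using \<open>finite I\<close> that by (simp add: m0_def le_imp_inverse_le)
    have "(\<lambda>i a. a \<in> first_hit_block en F i) \<in> G m" if "m \<in> I" for m
      using near m0_le[OF that] by (intro blocks_in_G[OF F]) linarith
    moreover have "(\<lambda>i a. a \<in> first_hit_block en F i) \<in> K"
      using blocks_in_G[OF F near] by (simp add: G_def)
    ultimately show "K \<inter> (\<Inter>m\<in>I. G m) \<noteq> {}" by blast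
  qed
  then obtain P :: "nat \<Rightarrow> 'g set" where P: "\<forall>i. P i \<in> insert {} S" "disjoint_family P"
    and G: "\<And>m. (\<lambda>i a. a \<in> P i) \<in> G m"
    unfolding K_def by blast
  show ?thesis
    using P G by (intro that) (auto simp: G_def)
qed

lemma norm_attained_by_disjoint_sequence:
  assumes "pointwise_closed S"
  obtains P :: "nat \<Rightarrow> 'g set"
  where "\<And>i. P i \<in> insert {} S" "disjoint_family P" "(\<lambda>i. (star (P i) x)\<^sup>2) sums (norm x)\<^sup>2"
proof -
  obtain \<phi> where \<phi>: "\<And>m. fin_supp (\<phi> m)" "\<And>m. norm (x - E (\<phi> m)) < inverse (real (Suc m))"
    using E_approximating_sequence by blast
  have sq: "(norm (x - E (\<phi> m)))\<^sup>2 \<le> inverse (real (Suc m))" for m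
  proof -
    have "(norm (x - E (\<phi> m)))\<^sup>2 \<le> (inverse (real (Suc m)))\<^sup>2"
      using \<phi>(2)[of m] by (intro power_mono) auto
    also have "\<dots> \<le> inverse (real (Suc m))"
      by (simp add: power2_eq_square mult_left_le_one_le inverse_le_1_iff)
    finally show ?thesis .
  qed
  obtain en :: "nat \<Rightarrow> 'g" and N where N: "\<And>m. {a. \<phi> m a \<noteq> 0} \<subseteq> en ` {..N m}"
    by (rule exists_enumeration_covering[of "\<lambda>m. {a. \<phi> m a \<noteq> 0}"]) (use \<phi>(1) in \<open>auto simp: fin_supp_def\<close>)
  obtain P where P: "\<And>i. P i \<in> insert {} S" "disjoint_family P"
    and near: "\<And>m. (norm x)\<^sup>2 - 2 * inverse (real (Suc m)) \<le> (\<Sum>i\<le>N m. (star (P i) x)\<^sup>2)"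
    using exists_disjoint_sequence_near_norm[OF assms \<phi>(1) sq N] by blast
  have "(\<lambda>i. (star (P i) x)\<^sup>2) sums (norm x)\<^sup>2"
  proof (rule sums_if_partial_sums_approach)
    show "(\<Sum>i<n. (star (P i) x)\<^sup>2) \<le> (norm x)\<^sup>2" for n
      by (rule sum_sq_star_sequence_le[OF P])
    fix e :: real assume "e > 0"
    then obtain m where "inverse (real (Suc m)) < e / 2"
      using reals_Archimedean[of "e / 2"] by auto
    then have "(norm x)\<^sup>2 - e \<le> (\<Sum>i<Suc (N m). (star (P i) x)\<^sup>2)"
      using near[of m] by (simp add: lessThan_Suc_atMost)
    then show "\<exists>n. (norm x)\<^sup>2 - e \<le> (\<Sum>i<n. (star (P i) x)\<^sup>2)" ..
  qed simp
  with P show ?thesis by (rule that)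
qed

lemma exists_vanishing_norming_functional:
  assumes "pointwise_closed S"
  shows "\<exists>k. bounded_linear k \<and> (\<forall>v. k v \<le> norm v) \<and> k z = norm z \<and>
    (\<forall>y. bounded (range y) \<longrightarrow> (\<forall>f\<in>star ` S. (\<lambda>n. f (y n)) \<longlonglongrightarrow> 0) \<longrightarrow> (\<lambda>n. k (y n)) \<longlonglongrightarrow> 0)"
proof (cases "z = 0")
  case True
  then show ?thesis
    by (intro exI[of _ "\<lambda>_. 0"]) (simp add: bounded_linear_zero)
next
  case False
  obtain P where P: "\<And>i. P i \<in> insert {} S" "disjoint_family P"
    and P_sums: "(\<lambda>i. (star (P i) z)\<^sup>2) sums (norm z)\<^sup>2"
    using norm_attained_by_disjoint_sequence[OF assms] by blast
  define a where "a i = star (P i) z / norm z" for i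
  have "(\<lambda>i. (a i)\<^sup>2) sums ((norm z)\<^sup>2 / (norm z)\<^sup>2)"
    unfolding a_def power_divide by (rule sums_divide[OF P_sums])
  then have a: "summable (\<lambda>i. (a i)\<^sup>2)" "(\<Sum>i. (a i)\<^sup>2) = 1"
    using False by (auto simp: sums_iff)
  have lin: "linear (star (P i))" for i
    using bounded_linear_star[OF P(1)] by (rule bounded_linear.linear)
  have bessel: "(\<Sum>i<n. (star (P i) v)\<^sup>2) \<le> (norm v)\<^sup>2" for v n
    by (rule sum_sq_star_sequence_le[OF P])
  define k where "k = (\<lambda>v. \<Sum>i. a i * star (P i) v)"
  have k_lin: "bounded_linear k" and k_le: "\<bar>k v\<bar> \<le> norm v" for v
    using bounded_linear_l2_combination[OF lin bessel a(1)] a(2) by (auto simp: k_def)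
  have "k z = (\<Sum>i. (star (P i) z)\<^sup>2 / norm z)"
    by (simp add: k_def a_def power2_eq_square)
  also have "\<dots> = norm z"
    using sums_unique[OF sums_divide[OF P_sums, of "norm z"]] False by (simp add: power2_eq_square)
  finally have k_z: "k z = norm z" .
  have "(\<lambda>n. k (y n)) \<longlonglongrightarrow> 0"
    if "bounded (range y)" and vanish: "\<forall>f\<in>star ` S. (\<lambda>n. f (y n)) \<longlonglongrightarrow> 0" for y
  proof -
    have "(\<lambda>n. star (P i) (y n)) \<longlonglongrightarrow> 0" for i
      using P(1)[of i] vanish by auto
    then show ?thesis
      unfolding k_def by (rule suminf_mult_bessel_tendsto_zero[OF a(1) bessel that(1)])
  qed
  then show ?thesis
    using k_lin k_le k_z by (intro exI[of _ k]) (auto simp: abs_le_iff)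
qed

end

theorem corollary2p7:
  fixes S :: "'g set set"
    and E :: "('g \<Rightarrow> real) \<Rightarrow> 'x::banach"
    and x :: "nat \<Rightarrow> 'x"
  assumes "pointwise_closed S"
    and "\<forall>a. {a} \<in> S"
    and "is_JS_completion S E"
    and "bounded (range x)"
    and "\<forall>s\<in>S. \<forall>f. is_s_star S E s f \<longrightarrow> Cauchy (\<lambda>n. f (x n))"
  shows "weakly_Cauchy x"
proof -
  interpret JS_completion S E
    by unfold_locales (fact assms(3))
  show ?thesis
  proof (rule weakly_Cauchy_if_norming_functionals_vanish[where \<Phi> = "star ` S"])
    show "bounded (range x)" by (fact assms(4))
    show "linear f" if "f \<in> star ` S" for f
      using that bounded_linear_star bounded_linear.linear by blast
    show "Cauchy (\<lambda>n. f (x n))" if "f \<in> star ` S" for f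
      using that assms(5) is_s_star_star by blast
    show "\<exists>k. bounded_linear k \<and> (\<forall>v. k v \<le> norm v) \<and> k z = norm z \<and>
        (\<forall>y. bounded (range y) \<longrightarrow> (\<forall>f\<in>star ` S. (\<lambda>n. f (y n)) \<longlonglongrightarrow> 0) \<longrightarrow> (\<lambda>n. k (y n)) \<longlonglongrightarrow> 0)"
      for z by (rule exists_vanishing_norming_functional[OF assms(1)])
  qed
qed

end
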